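(* Let $M\subseteq V$, let $SB^\ast$ be a minimum satellite bridge for $M$, and let $C\subseteq V_S$ be a set of satellite nodes each of which is adjacent in $\widetilde G$ to at least one vertex of $M$. Then there is a tree in $\widetilde G_s$ whose vertex set contains $N(SB^\ast)\cup C$ and which has at most $|N(SB^\ast)|+3|C|-1$ edges. Consequently, every minimum Steiner tree $ST^\ast$ of $C$ in $\widetilde G_s$ (a tree in $\widetilde G_s$ containing $C$ with the minimum number of edges) satisfies $|E(ST^\ast)|\le |N(SB^\ast)|+3|C|-1$.
   Context: Let $G=(V,E)$ be a finite, simple, undirected, connected graph with $|V|\ge 2$. Fix a positive integer $K$ and, for every $u\in V$, a nonempty set $\Gamma(u)\subseteq\{1,\dots,K\}$. Let $nb_G(u)$ be the neighbours of $u$ in $G$. For a tree $T$, $N(T)$ and $E(T)$ are its vertex and edge sets. The extended graph $\widetilde G=(\widetilde V,\widetilde E)$ of $G$: (i) initially $\widetilde V=V$, $\widetilde E=\emptyset$; (ii) for each $u\in V$ and each $i\in\bigcup_{v\in nb_G(u)}\Gamma(v)$, add a new vertex $\lambda(u,i)$ (satellite node of $u$; $u$ is its nuclear node); $\Psi(u)$ is the set of satellite nodes of $u$; (iii) for each $u\in V$, join every pair of distinct vertices of $\Psi(u)\cup\{u\}$; (iv) for each edge $\{u,v\}\in E$ (in each orientation $(u,v)$), each $i\in\Gamma(v)$, $j\in\Gamma(u)$, add edges $\{\lambda(u,i),\lambda(v,j)\}$, $\{\lambda(u,i),v\}$, $\{u,\lambda(v,j)\}$. $V_S=\widetilde V\setminus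 V$ is the set of satellite nodes, and $\widetilde G_s$ is the subgraph of $\widetilde G$ induced by $V_S$. Given $M\subseteq V$, a satellite bridge is a (nonempty) subtree $SB$ of $\widetilde G$ all of whose vertices are satellite nodes and such that every vertex of $M$ is adjacent in $\widetilde G$ to at least one vertex of $SB$. A minimum satellite bridge $SB^\ast$ is a satellite bridge with the minimum number of vertices. *)

theory Defs
  imports Main
begin

text \<open>Vertices of the extended graph: nuclear nodes (original vertices) and
  satellite nodes lambda(u,i).\<close>
datatype 'v xnode = Nuc 'v | Sat 'v nat

definition adj_rel :: "'a set set \<Rightarrow> ('a \<times> 'a) set" where
  "adj_rel T = {(x, y). {x, y} \<in> T}"

definition simple_graph :: "'a set \<Rightarrow> 'a set set \<Rightarrow> bool" where
  "simple_graph N T \<longleftrightarrow> finite N \<and>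
     (\<forall>e\<in>T. \<exists>u v. e = {u, v} \<and> u \<noteq> v \<and> u \<in> N \<and> v \<in> N)"

definition connected_graph :: "'a set \<Rightarrow> 'a set set \<Rightarrow> bool" where
  "connected_graph N T \<longleftrightarrow> (\<forall>x\<in>N. \<forall>y\<in>N. (x, y) \<in> (adj_rel T \<inter> (N \<times> N))\<^sup>*)"

definition has_cycle :: "'a set set \<Rightarrow> bool" where
  "has_cycle T \<longleftrightarrow> (\<exists>xs. length xs \<ge> 3 \<and> distinct xs \<and>
      (\<forall>i. Suc i < length xs \<longrightarrow> {xs ! i, xs ! Suc i} \<in> T) \<and> {last xs, hd xs} \<in> T)"

definition is_tree :: "'a set \<Rightarrow> 'a set set \<Rightarrow> bool" where
  "is_tree N T \<longleftrightarrow> N \<noteq> {} \<and> simple_graph N T \<and> connected_graph N T \<and> \<not> has_cycle T"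

definition nb :: "'v set set \<Rightarrow> 'v \<Rightarrow> 'v set" where
  "nb E u = {v. {u, v} \<in> E}"

definition Psi :: "'v set set \<Rightarrow> ('v \<Rightarrow> nat set) \<Rightarrow> 'v \<Rightarrow> 'v xnode set" where
  "Psi E \<Gamma> u = {Sat u i | i. i \<in> (\<Union>v\<in>nb E u. \<Gamma> v)}"

definition sat_nodes :: "'v set \<Rightarrow> 'v set set \<Rightarrow> ('v \<Rightarrow> nat set) \<Rightarrow> 'v xnode set" where
  "sat_nodes V E \<Gamma> = (\<Union>u\<in>V. Psi E \<Gamma> u)"

definition ext_vertices :: "'v set \<Rightarrow> 'v set set \<Rightarrow> ('v \<Rightarrow> nat set) \<Rightarrow> 'v xnode set" where
  "ext_vertices V E \<Gamma> = Nuc ` V \<union> sat_nodes V E \<Gamma>"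

definition ext_edges :: "'v set \<Rightarrow> 'v set set \<Rightarrow> ('v \<Rightarrow> nat set) \<Rightarrow> 'v xnode set set" where
  "ext_edges V E \<Gamma> =
     {{x, y} | x y. x \<noteq> y \<and> (\<exists>u\<in>V. x \<in> insert (Nuc u) (Psi E \<Gamma> u) \<and> y \<in> insert (Nuc u) (Psi E \<Gamma> u))}
   \<union> {{Sat u i, Sat v j} | u v i j. {u, v} \<in> E \<and> i \<in> \<Gamma> v \<and> j \<in> \<Gamma> u}
   \<union> {{Sat u i, Nuc v} | u v i. {u, v} \<in> E \<and> i \<in> \<Gamma> v}
   \<union> {{Nuc u, Sat v j} | u v j. {u, v} \<in> E \<and> j \<in> \<Gamma> u}"

definition ext_subtree :: "'v set \<Rightarrow> 'v set set \<Rightarrow> ('v \<Rightarrow> nat set) \<Rightarrow> 'v xnode set \<Rightarrow> 'v xnode set set \<Rightarrow> bool" where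
  "ext_subtree V E \<Gamma> N T \<longleftrightarrow> is_tree N T \<and> N \<subseteq> ext_vertices V E \<Gamma> \<and> T \<subseteq> ext_edges V E \<Gamma>"

definition sat_tree :: "'v set \<Rightarrow> 'v set set \<Rightarrow> ('v \<Rightarrow> nat set) \<Rightarrow> 'v xnode set \<Rightarrow> 'v xnode set set \<Rightarrow> bool" where
  "sat_tree V E \<Gamma> N T \<longleftrightarrow> is_tree N T \<and> N \<subseteq> sat_nodes V E \<Gamma> \<and> T \<subseteq> ext_edges V E \<Gamma>"

definition satellite_bridge ::
  "'v set \<Rightarrow> 'v set set \<Rightarrow> ('v \<Rightarrow> nat set) \<Rightarrow> 'v set \<Rightarrow> 'v xnode set \<Rightarrow> 'v xnode set set \<Rightarrow> bool" where
  "satellite_bridge V E \<Gamma> M N T \<longleftrightarrow> ext_subtree V E \<Gamma> N T \<and> N \<subseteq> sat_nodes V E \<Gamma> \<and>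
     (\<forall>m\<in>M. \<exists>x\<in>N. {Nuc m, x} \<in> ext_edges V E \<Gamma>)"

definition min_satellite_bridge ::
  "'v set \<Rightarrow> 'v set set \<Rightarrow> ('v \<Rightarrow> nat set) \<Rightarrow> 'v set \<Rightarrow> 'v xnode set \<Rightarrow> 'v xnode set set \<Rightarrow> bool" where
  "min_satellite_bridge V E \<Gamma> M N T \<longleftrightarrow> satellite_bridge V E \<Gamma> M N T \<and>
     (\<forall>N' T'. satellite_bridge V E \<Gamma> M N' T' \<longrightarrow> card N \<le> card N')"

definition min_steiner_tree ::
  "'v set \<Rightarrow> 'v set set \<Rightarrow> ('v \<Rightarrow> nat set) \<Rightarrow> 'v xnode set \<Rightarrow> 'v xnode set \<Rightarrow> 'v xnode set set \<Rightarrow> bool" where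
  "min_steiner_tree V E \<Gamma> C N T \<longleftrightarrow> sat_tree V E \<Gamma> N T \<and> C \<subseteq> N \<and>
     (\<forall>N' T'. sat_tree V E \<Gamma> N' T' \<and> C \<subseteq> N' \<longrightarrow> card T \<le> card T')"

end

theory Submission imports Defs begin

text \<open>
  Each terminal c in C is adjacent to a nuclear node m of M, and m is in turn
  adjacent to some node x of the satellite bridge SB. The satellite nodes Psi(m) of m form a
  clique, and every satellite node adjacent to m is either in Psi(m) or adjacent to one of its
  members. Hence c reaches x by a walk c, h, h', x of at most three steps in the satellite
  subgraph. The union of N(SB) with these walks is a connected vertex set with at most
  |N(SB)| + 3|C| vertices, so a spanning tree of it has at most |N(SB)| + 3|C| - 1 edges; a
  minimum Steiner tree of C can only be smaller.
\<close>

section \<open>Trees and spanning trees\<close>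

lemma is_tree_simple_graph: "is_tree N T \<Longrightarrow> simple_graph N T"
  and is_tree_connected: "is_tree N T \<Longrightarrow> connected_graph N T"
  and is_tree_acyclic: "is_tree N T \<Longrightarrow> \<not> has_cycle T"
  and is_tree_nonempty: "is_tree N T \<Longrightarrow> N \<noteq> {}"
  unfolding is_tree_def by simp_all

lemma tree_edge_subset: "is_tree N T \<Longrightarrow> e \<in> T \<Longrightarrow> e \<subseteq> N"
  unfolding is_tree_def simple_graph_def by fastforce

lemma tree_edges_finite:
  assumes "is_tree N T" shows "finite T"
proof -
  have "T \<subseteq> Pow N" using tree_edge_subset[OF assms] by blast
  moreover have "finite N" using is_tree_simple_graph[OF assms] unfolding simple_graph_def by simp
  ultimately show ?thesis by (meson finite_Pow_iff finite_subset)
qed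

lemma single_vertex_tree: "is_tree {s} {}"
  unfolding is_tree_def by (simp add: simple_graph_def connected_graph_def has_cycle_def)

lemma cycle_vertex_two_neighbours:
  assumes len: "length xs \<ge> 3" and dis: "distinct xs"
    and steps: "\<forall>i. Suc i < length xs \<longrightarrow> {xs ! i, xs ! Suc i} \<in> T"
    and close: "{last xs, hd xs} \<in> T" and b: "b \<in> set xs"
  shows "\<exists>y z. y \<noteq> z \<and> {b, y} \<in> T \<and> {b, z} \<in> T"
proof -
  define n where "n = length xs"
  obtain p where p: "p < n" "xs ! p = b" using b unfolding n_def by (metis in_set_conv_nth)
  have ne: "xs \<noteq> []" using len by auto
  have last_nth: "last xs = xs ! (n - 1)" and hd_nth: "hd xs = xs ! 0"
    using ne by (simp_all add: n_def last_conv_nth hd_conv_nth)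
  define q where "q = (if Suc p < n then Suc p else 0)"
  define r where "r = (if p > 0 then p - 1 else n - 1)"
  have "{b, xs ! q} \<in> T"
  proof (cases "Suc p < n")
    case True
    thus ?thesis using steps[rule_format, of p] p unfolding q_def n_def by simp
  next
    case False
    hence "p = n - 1" using p by simp
    thus ?thesis using close p last_nth hd_nth unfolding q_def by simp
  qed
  moreover have "{b, xs ! r} \<in> T"
  proof (cases "p > 0")
    case True
    have "{xs ! (p - 1), xs ! Suc (p - 1)} \<in> T" using steps[rule_format, of "p - 1"] p True n_def by simp
    hence "{xs ! (p - 1), b} \<in> T" using p True by simp
    thus ?thesis using True unfolding r_def by (simp add: insert_commute)
  next
    case False
    thus ?thesis using close p last_nth hd_nth unfolding r_def by (auto simp: insert_commute)
  qed
  moreover have "xs ! q \<noteq> xs ! r"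
  proof -
    have "q < n" "r < n" using p len unfolding q_def r_def n_def by auto
    moreover have "q \<noteq> r" using p len unfolding q_def r_def n_def by auto
    ultimately show ?thesis using nth_eq_iff_index_eq[OF dis] unfolding n_def by blast
  qed
  ultimately show ?thesis by blast
qed

text \<open>Adding a pendant edge to an acyclic edge set creates no cycle: the new vertex has a
  single neighbour, so it cannot lie on a cycle, and every other cycle was there before.\<close>
lemma pendant_edge_acyclic:
  assumes acyc: "\<not> has_cycle T" and fresh: "\<And>e. e \<in> T \<Longrightarrow> b \<notin> e" and ab: "a \<noteq> b"
  shows "\<not> has_cycle (insert {a, b} T)"
proof
  assume "has_cycle (insert {a, b} T)"
  then obtain xs where len: "length xs \<ge> 3" and dis: "distinct xs"
    and steps: "\<forall>i. Suc i < length xs \<longrightarrow> {xs ! i, xs ! Suc i} \<in> insert {a, b} T"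
    and close: "{last xs, hd xs} \<in> insert {a, b} T" unfolding has_cycle_def by blast
  show False
  proof (cases "b \<in> set xs")
    case True
    have only_a: "y = a" if "{b, y} \<in> insert {a, b} T" for y
    proof -
      have "{b, y} \<notin> T" using fresh by blast
      hence "{b, y} = {a, b}" using that by blast
      thus "y = a" using ab by (auto simp: doubleton_eq_iff)
    qed
    obtain y z where "y \<noteq> z" "{b, y} \<in> insert {a, b} T" "{b, z} \<in> insert {a, b} T"
      using cycle_vertex_two_neighbours[OF len dis steps close True] by blast
    thus False using only_a by blast
  next
    case False
    have ne: "xs \<noteq> []" using len by auto
    have "\<forall>i. Suc i < length xs \<longrightarrow> {xs ! i, xs ! Suc i} \<in> T"
    proof (intro allI impI)
      fix i assume i: "Suc i < length xs"
      hence "b \<notin> {xs ! i, xs ! Suc i}" using False nth_mem[of i xs] nth_mem[of "Suc i" xs] by auto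
      hence "{xs ! i, xs ! Suc i} \<noteq> {a, b}" by blast
      thus "{xs ! i, xs ! Suc i} \<in> T" using steps i by blast
    qed
    moreover have "{last xs, hd xs} \<in> T"
    proof -
      have "b \<notin> {last xs, hd xs}" using False ne by auto
      thus ?thesis using close by blast
    qed
    ultimately have "has_cycle T" using len dis unfolding has_cycle_def by blast
    thus False using acyc by contradiction
  qed
qed

lemma tree_add_leaf:
  assumes tree: "is_tree S T" and b: "b \<notin> S" and a: "a \<in> S"
  shows "is_tree (insert b S) (insert {a, b} T)"
proof -
  let ?R = "adj_rel T \<inter> S \<times> S"
  let ?R' = "adj_rel (insert {a, b} T) \<inter> insert b S \<times> insert b S"
  have ab: "a \<noteq> b" using a b by blast
  have simple: "simple_graph (insert b S) (insert {a, b} T)"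
    using is_tree_simple_graph[OF tree] ab a unfolding simple_graph_def by blast
  have old: "(x, y) \<in> ?R'\<^sup>*" if "x \<in> S" "y \<in> S" for x y
  proof -
    have "(x, y) \<in> ?R\<^sup>*" using is_tree_connected[OF tree] that unfolding connected_graph_def by blast
    moreover have "?R \<subseteq> ?R'" unfolding adj_rel_def by blast
    ultimately show ?thesis using rtrancl_mono by blast
  qed
  have new: "(b, a) \<in> ?R'" "(a, b) \<in> ?R'" using a unfolding adj_rel_def by (auto simp: insert_commute)
  have "connected_graph (insert b S) (insert {a, b} T)"
    unfolding connected_graph_def
  proof (intro ballI)
    fix x y assume "x \<in> insert b S" "y \<in> insert b S"
    hence "(x, a) \<in> ?R'\<^sup>*" "(a, y) \<in> ?R'\<^sup>*" using old a new by blast+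
    thus "(x, y) \<in> ?R'\<^sup>*" by (rule rtrancl_trans)
  qed
  moreover have "\<not> has_cycle (insert {a, b} T)"
    using pendant_edge_acyclic[OF is_tree_acyclic[OF tree] _ ab] tree_edge_subset[OF tree] b by blast
  ultimately show ?thesis using simple unfolding is_tree_def by blast
qed

lemma rtrancl_exit_edge:
  assumes "(x, y) \<in> R\<^sup>*" "x \<in> S" "y \<notin> S"
  shows "\<exists>a b. (a, b) \<in> R \<and> a \<in> S \<and> b \<notin> S"
  using assms by (induction rule: rtrancl_induct) blast+

lemma subtree_grow_step:
  assumes con: "connected_graph N T" and fin: "finite N"
    and sub: "S \<subseteq> N" "T' \<subseteq> T" and tree: "is_tree S T'"
    and size: "card T' = card S - 1" and small: "card S < card N"
  shows "\<exists>S2 T2. S2 \<subseteq> N \<and> T2 \<subseteq> T \<and> is_tree S2 T2 \<and> card S2 = Suc (card S) \<and> card T2 = card S"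
proof -
  have "S \<noteq> N" using small by auto
  then obtain w where w: "w \<in> N" "w \<notin> S" using sub(1) by blast
  obtain s where s: "s \<in> S" using is_tree_nonempty[OF tree] by blast
  have "s \<in> N" using s sub(1) by blast
  hence "(s, w) \<in> (adj_rel T \<inter> N \<times> N)\<^sup>*" using con w(1) unfolding connected_graph_def by blast
  then obtain a b where ab: "(a, b) \<in> adj_rel T \<inter> N \<times> N" "a \<in> S" "b \<notin> S"
    using rtrancl_exit_edge[OF _ s w(2)] by blast
  have edge: "{a, b} \<in> T" "b \<in> N" using ab(1) unfolding adj_rel_def by auto
  have finS: "finite S" using fin sub(1) finite_subset by blast
  have "{a, b} \<notin> T'" using tree_edge_subset[OF tree] ab(3) by blast
  hence "card (insert {a, b} T') = Suc (card T')" using tree_edges_finite[OF tree] by simp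
  also have "\<dots> = card S"
  proof -
    have "card S > 0" using s finS card_gt_0_iff by blast
    thus ?thesis using size by simp
  qed
  finally have "card (insert {a, b} T') = card S" .
  moreover have "card (insert b S) = Suc (card S)" using ab(3) finS by simp
  moreover have "insert b S \<subseteq> N" "insert {a, b} T' \<subseteq> T" using sub edge by simp_all
  ultimately show ?thesis using tree_add_leaf[OF tree ab(3) ab(2)] by blast
qed

lemma spanning_tree_exists:
  assumes con: "connected_graph N T" and fin: "finite N" and s: "s \<in> N"
  shows "\<exists>T'. T' \<subseteq> T \<and> is_tree N T' \<and> card T' = card N - 1"
proof -
  have grow: "\<exists>S T'. S \<subseteq> N \<and> T' \<subseteq> T \<and> is_tree S T' \<and> card S = k \<and> card T' = k - 1"
    if "1 \<le> k" "k \<le> card N" for k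
    using that
  proof (induction k rule: nat_induct_at_least)
    case base
    show ?case using s single_vertex_tree by (intro exI[of _ "{s}"] exI[of _ "{}"]) auto
  next
    case (Suc k)
    then obtain S T' where S: "S \<subseteq> N" "T' \<subseteq> T" "is_tree S T'" "card S = k" "card T' = k - 1"
      by auto
    have "card S < card N" using S(4) Suc.prems by simp
    from subtree_grow_step[OF con fin S(1-3) _ this] S(4,5) show ?case by auto
  qed
  have "card N > 0" using fin s card_gt_0_iff by blast
  hence "1 \<le> card N" by simp
  then obtain S T' where S: "S \<subseteq> N" "T' \<subseteq> T" "is_tree S T'" "card S = card N" "card T' = card N - 1"
    using grow[of "card N"] by auto
  have "S = N" using card_subset_eq[OF fin S(1) S(4)] .
  with S show ?thesis by blast
qed

section \<open>Lazy walks and trees through walks\<close>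

definition linked :: "'a set set \<Rightarrow> 'a \<Rightarrow> 'a \<Rightarrow> bool" where
  "linked X a b \<longleftrightarrow> a = b \<or> {a, b} \<in> X"

fun lazy_walk :: "'a set set \<Rightarrow> 'a list \<Rightarrow> bool" where
  "lazy_walk X (x # y # xs) \<longleftrightarrow> linked X x y \<and> lazy_walk X (y # xs)"
| "lazy_walk X _ \<longleftrightarrow> True"

lemma linked_sym: "linked X a b \<Longrightarrow> linked X b a"
  unfolding linked_def by (auto simp: insert_commute)

definition induced_edges :: "'a set set \<Rightarrow> 'a set \<Rightarrow> 'a set set" where
  "induced_edges X N = {e \<in> X. e \<subseteq> N}"

lemma sym_adj_rel: "sym (adj_rel T \<inter> N \<times> N)"
  unfolding adj_rel_def sym_def by (auto simp: insert_commute)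

lemma lazy_walk_reaches_last:
  assumes "lazy_walk X p" "set p \<subseteq> N" "v \<in> set p"
  shows "(v, last p) \<in> (adj_rel (induced_edges X N) \<inter> N \<times> N)\<^sup>*"
  using assms
proof (induction X p arbitrary: v rule: lazy_walk.induct)
  case (1 X x y xs)
  let ?R = "adj_rel (induced_edges X N) \<inter> N \<times> N"
  have to_last: "(y, last (y # xs)) \<in> ?R\<^sup>*" using "1.IH"[of y] "1.prems" by simp
  have "(x, y) \<in> ?R\<^sup>*"
  proof (cases "x = y")
    case False
    hence "{x, y} \<in> X" using "1.prems"(1) by (simp add: linked_def)
    hence "(x, y) \<in> ?R" using "1.prems"(2) unfolding adj_rel_def induced_edges_def by simp
    thus ?thesis by blast
  qed simp
  moreover have "(v, last (y # xs)) \<in> ?R\<^sup>*" if "v \<noteq> x" using "1.IH"[of v] "1.prems" that by simp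
  ultimately show ?case using to_last by (cases "v = x") (auto intro: rtrancl_trans)
qed auto

lemma connected_by_walks:
  assumes core: "connected_graph S T" "T \<subseteq> X" "S \<subseteq> N"
    and walks: "\<And>v. v \<in> N \<Longrightarrow> \<exists>p. lazy_walk X p \<and> v \<in> set p \<and> last p \<in> S \<and> set p \<subseteq> N"
  shows "connected_graph N (induced_edges X N)"
proof -
  let ?R = "adj_rel (induced_edges X N) \<inter> N \<times> N"
  have to_core: "\<exists>s\<in>S. (v, s) \<in> ?R\<^sup>*" if v: "v \<in> N" for v
  proof -
    obtain p where p: "lazy_walk X p" "v \<in> set p" "last p \<in> S" "set p \<subseteq> N" using walks[OF v] by blast
    have "(v, last p) \<in> ?R\<^sup>*" using lazy_walk_reaches_last[OF p(1) p(4) p(2)] .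
    thus ?thesis using p(3) by (intro bexI[of _ "last p"])
  qed
  have core_sub: "adj_rel T \<inter> S \<times> S \<subseteq> ?R"
    using core(2,3) by (auto simp: adj_rel_def induced_edges_def)
  have in_core: "(s, t) \<in> ?R\<^sup>*" if "s \<in> S" "t \<in> S" for s t
  proof -
    have "(s, t) \<in> (adj_rel T \<inter> S \<times> S)\<^sup>*" using core(1) that by (simp add: connected_graph_def)
    thus ?thesis using rtrancl_mono[OF core_sub] by (rule subsetD[rotated])
  qed
  have sym_R: "(a, b) \<in> ?R\<^sup>* \<Longrightarrow> (b, a) \<in> ?R\<^sup>*" for a b
    using sym_rtrancl[OF sym_adj_rel] by (rule symD)
  show ?thesis unfolding connected_graph_def
  proof (intro ballI)
    fix x y assume "x \<in> N" "y \<in> N"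
    then obtain s t where st: "s \<in> S" "t \<in> S" "(x, s) \<in> ?R\<^sup>*" "(y, t) \<in> ?R\<^sup>*"
      using to_core by meson
    have "(x, t) \<in> ?R\<^sup>*" using st(3) in_core[OF st(1,2)] by (rule rtrancl_trans)
    thus "(x, y) \<in> ?R\<^sup>*" using sym_R[OF st(4)] by (rule rtrancl_trans)
  qed
qed

text \<open>Counting vertices: walks of at most k steps that end in S add at most k new
  vertices each, since their last vertex already lies in S.\<close>
lemma card_union_walks_le:
  assumes finS: "finite S" and finC: "finite C"
    and p: "\<And>c. c \<in> C \<Longrightarrow> p c \<noteq> [] \<and> last (p c) \<in> S \<and> length (p c) \<le> Suc k"
  shows "card (S \<union> (\<Union>c\<in>C. set (p c))) \<le> card S + k * card C"
proof -
  have "set (p c) \<subseteq> insert (last (p c)) (set (butlast (p c)))" if "c \<in> C" for c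
  proof -
    have "set (p c) = set (butlast (p c) @ [last (p c)])" using p[OF that] by simp
    thus ?thesis by simp
  qed
  hence "S \<union> (\<Union>c\<in>C. set (p c)) \<subseteq> S \<union> (\<Union>c\<in>C. set (butlast (p c)))" using p by blast
  hence "card (S \<union> (\<Union>c\<in>C. set (p c))) \<le> card (S \<union> (\<Union>c\<in>C. set (butlast (p c))))"
    using finS finC by (intro card_mono) simp_all
  also have "\<dots> \<le> card S + card (\<Union>c\<in>C. set (butlast (p c)))" by (rule card_Un_le)
  also have "card (\<Union>c\<in>C. set (butlast (p c))) \<le> (\<Sum>c\<in>C. card (set (butlast (p c))))"
    using finC by (rule card_UN_le)
  also have "\<dots> \<le> (\<Sum>c\<in>C. k)"
  proof (rule sum_mono)
    fix c assume "c \<in> C"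
    have "card (set (butlast (p c))) \<le> length (butlast (p c))" by (rule card_length)
    moreover have "length (p c) \<le> Suc k" using p[OF \<open>c \<in> C\<close>] by blast
    ultimately show "card (set (butlast (p c))) \<le> k" by simp
  qed
  finally show ?thesis by (simp add: mult.commute)
qed

lemma tree_through_walks:
  assumes tree: "is_tree S T" and TX: "T \<subseteq> X" and SP: "S \<subseteq> P" and finC: "finite C"
    and walks: "\<And>c. c \<in> C \<Longrightarrow> \<exists>p. lazy_walk X p \<and> p \<noteq> [] \<and> hd p = c \<and> last p \<in> S \<and>
                                   length p \<le> Suc k \<and> set p \<subseteq> P"
  shows "\<exists>N T'. is_tree N T' \<and> S \<union> C \<subseteq> N \<and> N \<subseteq> P \<and> T' \<subseteq> X \<and> card T' \<le> card S + k * card C - 1"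
proof -
  have "\<forall>c\<in>C. \<exists>q. lazy_walk X q \<and> q \<noteq> [] \<and> hd q = c \<and> last q \<in> S \<and> length q \<le> Suc k \<and> set q \<subseteq> P"
    by (intro ballI walks)
  then obtain p where "\<forall>c\<in>C. lazy_walk X (p c) \<and> p c \<noteq> [] \<and> hd (p c) = c \<and> last (p c) \<in> S \<and>
                             length (p c) \<le> Suc k \<and> set (p c) \<subseteq> P"
    by (elim bchoice[THEN exE])
  hence p: "lazy_walk X (p c)" "p c \<noteq> []" "hd (p c) = c" "last (p c) \<in> S"
      "length (p c) \<le> Suc k" "set (p c) \<subseteq> P" if "c \<in> C" for c
    using that by simp_all
  define N where "N = S \<union> (\<Union>c\<in>C. set (p c))"
  have finS: "finite S" using is_tree_simple_graph[OF tree] unfolding simple_graph_def by simp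
  have SN: "S \<subseteq> N" unfolding N_def by blast
  have CN: "C \<subseteq> N"
  proof
    fix c assume c: "c \<in> C"
    have "c \<in> set (p c)" using hd_in_set[OF p(2)[OF c]] p(3)[OF c] by simp
    thus "c \<in> N" using c unfolding N_def by blast
  qed
  have NP: "N \<subseteq> P" using SP p(6) unfolding N_def by blast
  have conN: "connected_graph N (induced_edges X N)"
  proof (rule connected_by_walks[OF is_tree_connected[OF tree] TX SN])
    fix v assume "v \<in> N"
    then consider "v \<in> S" | c where "c \<in> C" "v \<in> set (p c)" unfolding N_def by blast
    thus "\<exists>q. lazy_walk X q \<and> v \<in> set q \<and> last q \<in> S \<and> set q \<subseteq> N"
    proof cases
      case 1
      thus ?thesis using SN by (intro exI[of _ "[v]"]) auto
    next
      case 2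
      have "set (p c) \<subseteq> N" using 2(1) unfolding N_def by blast
      thus ?thesis using p(1,4)[OF 2(1)] 2(2) by (intro exI[of _ "p c"]) simp
    qed
  qed
  have finN: "finite N" unfolding N_def using finS finC by simp
  obtain s where s: "s \<in> N" using is_tree_nonempty[OF tree] SN by blast
  obtain T' where T': "T' \<subseteq> induced_edges X N" "is_tree N T'" "card T' = card N - 1"
    using spanning_tree_exists[OF conN finN s] by blast
  have "card N \<le> card S + k * card C"
    unfolding N_def by (rule card_union_walks_le[OF finS finC]) (simp add: p)
  hence "card T' \<le> card S + k * card C - 1" using T'(3) by simp
  moreover have "T' \<subseteq> X" using T'(1) unfolding induced_edges_def by blast
  moreover have "S \<union> C \<subseteq> N" using SN CN by simp
  ultimately show ?thesis using T'(2) NP by blast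
qed


section \<open>Satellite nodes of the extended graph\<close>

lemma simple_graph_endpoint:
  assumes "simple_graph V E" "{u, v} \<in> E" shows "u \<in> V"
proof -
  obtain a b where "{u, v} = {a, b}" "a \<in> V" "b \<in> V"
    using assms unfolding simple_graph_def by blast
  thus ?thesis by (auto simp: doubleton_eq_iff)
qed

text \<open>There are finitely many satellite nodes, since colours are bounded by K; this makes
  the terminal set C finite.\<close>
lemma sat_nodes_finite:
  assumes G: "simple_graph V E" and Gam: "\<And>u. u \<in> V \<Longrightarrow> \<Gamma> u \<subseteq> {1..K}"
  shows "finite (sat_nodes V E \<Gamma>)"
proof -
  have "Psi E \<Gamma> u \<subseteq> Sat u ` {1..K}" if u: "u \<in> V" for u
  proof -
    have "nb E u \<subseteq> V"
    proof
      fix v assume "v \<in> nb E u"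
      hence "{v, u} \<in> E" by (simp add: nb_def insert_commute)
      thus "v \<in> V" by (rule simple_graph_endpoint[OF G])
    qed
    thus ?thesis unfolding Psi_def using Gam by blast
  qed
  hence "finite (Psi E \<Gamma> u)" if "u \<in> V" for u
    using that by (meson finite_atLeastAtMost finite_imageI finite_subset)
  moreover have "finite V" using G unfolding simple_graph_def by simp
  ultimately show ?thesis unfolding sat_nodes_def by (intro finite_UN_I)
qed

lemma sat_node_is_Sat: "y \<in> sat_nodes V E \<Gamma> \<Longrightarrow> \<exists>u i. y = Sat u i"
  unfolding sat_nodes_def Psi_def by blast

lemma Psi_clique:
  assumes "m \<in> V" "h \<in> Psi E \<Gamma> m" "h' \<in> Psi E \<Gamma> m"
  shows "linked (ext_edges V E \<Gamma>) h h'"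
proof (cases "h = h'")
  case False
  hence "{h, h'} \<in> {{x, y} | x y. x \<noteq> y \<and>
            (\<exists>u\<in>V. x \<in> insert (Nuc u) (Psi E \<Gamma> u) \<and> y \<in> insert (Nuc u) (Psi E \<Gamma> u))}"
    using assms by blast
  thus ?thesis unfolding linked_def ext_edges_def by (intro disjI2 UnI1)
qed (simp add: linked_def)

lemma nuclear_satellite_edge:
  assumes "{Nuc m, Sat u i} \<in> ext_edges V E \<Gamma>"
  shows "Sat u i \<in> Psi E \<Gamma> m \<or> ({u, m} \<in> E \<and> i \<in> \<Gamma> m)"
  using assms unfolding ext_edges_def
proof (elim UnE)
  assume "{Nuc m, Sat u i} \<in> {{x, y} | x y. x \<noteq> y \<and>
            (\<exists>u\<in>V. x \<in> insert (Nuc u) (Psi E \<Gamma> u) \<and> y \<in> insert (Nuc u) (Psi E \<Gamma> u))}"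
  then obtain x y w where xy: "{Nuc m, Sat u i} = {x, y}"
      "x \<in> insert (Nuc w) (Psi E \<Gamma> w)" "y \<in> insert (Nuc w) (Psi E \<Gamma> w)"
    by blast
  have Nuc_notin: "Nuc z \<notin> Psi E \<Gamma> w" for z unfolding Psi_def by blast
  have "(x = Nuc m \<and> y = Sat u i) \<or> (x = Sat u i \<and> y = Nuc m)" using xy(1) by (metis doubleton_eq_iff)
  thus ?thesis using xy Nuc_notin by auto
next
  assume "{Nuc m, Sat u i} \<in> {{Sat u i, Sat v j} | u v i j. {u, v} \<in> E \<and> i \<in> \<Gamma> v \<and> j \<in> \<Gamma> u}"
  thus ?thesis by (auto simp: doubleton_eq_iff)
next
  assume "{Nuc m, Sat u i} \<in> {{Sat u i, Nuc v} | u v i. {u, v} \<in> E \<and> i \<in> \<Gamma> v}"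
  thus ?thesis by (auto simp: doubleton_eq_iff)
next
  assume "{Nuc m, Sat u i} \<in> {{Nuc u, Sat v j} | u v j. {u, v} \<in> E \<and> j \<in> \<Gamma> u}"
  thus ?thesis by (auto simp: doubleton_eq_iff insert_commute)
qed

text \<open>Every satellite node adjacent to a nuclear node m is linked to a satellite node of m:
  either it is one, or it is a satellite of a neighbour u of m, adjacent to the satellite
  of m carrying any colour of u.\<close>
lemma satellite_linked_to_Psi:
  assumes G: "simple_graph V E" and Gam: "\<And>u. u \<in> V \<Longrightarrow> \<Gamma> u \<noteq> {}"
    and y: "y \<in> sat_nodes V E \<Gamma>" and e: "{Nuc m, y} \<in> ext_edges V E \<Gamma>"
  shows "\<exists>h\<in>Psi E \<Gamma> m. linked (ext_edges V E \<Gamma>) y h"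
proof (cases "y \<in> Psi E \<Gamma> m")
  case True
  thus ?thesis by (intro bexI[of _ y]) (simp_all add: linked_def)
next
  case False
  obtain u i where yui: "y = Sat u i" using sat_node_is_Sat[OF y] by blast
  have "{Nuc m, Sat u i} \<in> ext_edges V E \<Gamma>" using e yui by simp
  hence "Sat u i \<in> Psi E \<Gamma> m \<or> ({u, m} \<in> E \<and> i \<in> \<Gamma> m)" by (rule nuclear_satellite_edge)
  hence um: "{u, m} \<in> E" "i \<in> \<Gamma> m" using False yui by simp_all
  have "u \<in> V" using simple_graph_endpoint[OF G um(1)] .
  then obtain a where a: "a \<in> \<Gamma> u" using Gam by blast
  have "u \<in> nb E m" using um(1) by (simp add: nb_def insert_commute)
  hence h: "Sat m a \<in> Psi E \<Gamma> m" using a unfolding Psi_def by blast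
  have "{Sat u i, Sat m a} \<in> {{Sat u i, Sat v j} | u v i j. {u, v} \<in> E \<and> i \<in> \<Gamma> v \<and> j \<in> \<Gamma> u}"
    using um a by blast
  hence "{Sat u i, Sat m a} \<in> ext_edges V E \<Gamma>" unfolding ext_edges_def by (intro UnI1 UnI2)
  thus ?thesis using h yui by (intro bexI[of _ "Sat m a"]) (simp_all add: linked_def)
qed

lemma satellite_walk_via_nucleus:
  assumes G: "simple_graph V E" and Gam: "\<And>u. u \<in> V \<Longrightarrow> \<Gamma> u \<noteq> {}" and m: "m \<in> V"
    and c: "c \<in> sat_nodes V E \<Gamma>" "{Nuc m, c} \<in> ext_edges V E \<Gamma>"
    and x: "x \<in> sat_nodes V E \<Gamma>" "{Nuc m, x} \<in> ext_edges V E \<Gamma>"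
  shows "\<exists>p. lazy_walk (ext_edges V E \<Gamma>) p \<and> p \<noteq> [] \<and> hd p = c \<and> last p = x \<and>
             length p \<le> 4 \<and> set p \<subseteq> sat_nodes V E \<Gamma>"
proof -
  let ?X = "ext_edges V E \<Gamma>"
  obtain h where h: "h \<in> Psi E \<Gamma> m" "linked ?X c h"
    using satellite_linked_to_Psi[OF G Gam c] by blast
  obtain h' where h': "h' \<in> Psi E \<Gamma> m" "linked ?X x h'"
    using satellite_linked_to_Psi[OF G Gam x] by blast
  have "lazy_walk ?X [c, h, h', x]"
    using h(2) Psi_clique[OF m h(1) h'(1)] linked_sym[OF h'(2)] by simp
  moreover have "h \<in> sat_nodes V E \<Gamma>" "h' \<in> sat_nodes V E \<Gamma>"
    using h(1) h'(1) m unfolding sat_nodes_def by blast+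
  ultimately show ?thesis using c(1) x(1) by (intro exI[of _ "[c, h, h', x]"]) simp
qed


section \<open>The bound on Steiner trees of terminals near a satellite bridge\<close>

lemma satellite_tree_through_bridge:
  assumes G: "simple_graph V E" and Gam: "\<And>u. u \<in> V \<Longrightarrow> \<Gamma> u \<noteq> {}" and M: "M \<subseteq> V"
    and SB: "satellite_bridge V E \<Gamma> M SBN SBE"
    and C: "C \<subseteq> sat_nodes V E \<Gamma>" "finite C"
    and Cadj: "\<And>c. c \<in> C \<Longrightarrow> \<exists>m\<in>M. {Nuc m, c} \<in> ext_edges V E \<Gamma>"
  shows "\<exists>N T. sat_tree V E \<Gamma> N T \<and> SBN \<union> C \<subseteq> N \<and> card T \<le> card SBN + 3 * card C - 1"
proof -
  let ?X = "ext_edges V E \<Gamma>"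
  have bridge: "is_tree SBN SBE" "SBE \<subseteq> ?X" "SBN \<subseteq> sat_nodes V E \<Gamma>"
      "\<And>m. m \<in> M \<Longrightarrow> \<exists>x\<in>SBN. {Nuc m, x} \<in> ?X"
    using SB unfolding satellite_bridge_def ext_subtree_def by simp_all
  have walks: "\<exists>p. lazy_walk ?X p \<and> p \<noteq> [] \<and> hd p = c \<and> last p \<in> SBN \<and>
                  length p \<le> Suc 3 \<and> set p \<subseteq> sat_nodes V E \<Gamma>" if c: "c \<in> C" for c
  proof -
    obtain m where m: "m \<in> M" "{Nuc m, c} \<in> ?X" using Cadj[OF c] by blast
    obtain x where x: "x \<in> SBN" "{Nuc m, x} \<in> ?X" using bridge(4)[OF m(1)] by blast
    have mV: "m \<in> V" using m(1) M by blast
    obtain p where "lazy_walk ?X p" "p \<noteq> []" "hd p = c" "last p = x" "length p \<le> 4"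
        "set p \<subseteq> sat_nodes V E \<Gamma>"
      using satellite_walk_via_nucleus[of V E \<Gamma> m c x] G Gam mV c C(1) m(2) x bridge(3) by blast
    thus ?thesis using x(1) by (intro exI[of _ p]) simp
  qed
  obtain N T where "is_tree N T" "SBN \<union> C \<subseteq> N" "N \<subseteq> sat_nodes V E \<Gamma>" "T \<subseteq> ?X"
      "card T \<le> card SBN + 3 * card C - 1"
    using tree_through_walks[OF bridge(1,2,3) C(2) walks] by blast
  thus ?thesis unfolding sat_tree_def by blast
qed

lemma min_steiner_tree_le:
  assumes "min_steiner_tree V E \<Gamma> C N T" "sat_tree V E \<Gamma> N' T'" "C \<subseteq> N'"
  shows "card T \<le> card T'"
  using assms unfolding min_steiner_tree_def by blast

theorem mainTheorem6:
  fixes V :: "'v set" and E :: "'v set set" and \<Gamma> :: "'v \<Rightarrow> nat set" and K :: nat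
    and M :: "'v set" and SBN :: "'v xnode set" and SBE :: "'v xnode set set"
    and C :: "'v xnode set"
  assumes G: "simple_graph V E" "connected_graph V E" "card V \<ge> 2"
    and K: "K > 0"
    and Gam: "\<And>u. u \<in> V \<Longrightarrow> \<Gamma> u \<noteq> {} \<and> \<Gamma> u \<subseteq> {1..K}"
    and M: "M \<subseteq> V"
    and SB: "min_satellite_bridge V E \<Gamma> M SBN SBE"
    and C: "C \<subseteq> sat_nodes V E \<Gamma>"
    and Cadj: "\<And>c. c \<in> C \<Longrightarrow> \<exists>m\<in>M. {Nuc m, c} \<in> ext_edges V E \<Gamma>"
  shows "(\<exists>N T. sat_tree V E \<Gamma> N T \<and> SBN \<union> C \<subseteq> N \<and> card T \<le> card SBN + 3 * card C - 1)
       \<and> (\<forall>N T. min_steiner_tree V E \<Gamma> C N T \<longrightarrow> card T \<le> card SBN + 3 * card C - 1)"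
proof -
  have "finite C" using C sat_nodes_finite[OF G(1)] Gam by (meson finite_subset)
  moreover have "satellite_bridge V E \<Gamma> M SBN SBE" using SB unfolding min_satellite_bridge_def by simp
  ultimately obtain N T where NT: "sat_tree V E \<Gamma> N T" "SBN \<union> C \<subseteq> N"
      "card T \<le> card SBN + 3 * card C - 1"
    using satellite_tree_through_bridge[OF G(1) _ M _ C] Cadj Gam by blast
  have "card T' \<le> card SBN + 3 * card C - 1" if "min_steiner_tree V E \<Gamma> C N' T'" for N' T'
    using min_steiner_tree_le[OF that NT(1)] NT(2,3) by simp
  thus ?thesis using NT by blast
qed

end
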